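(* Assume the setting below ($\mathcal{S}$ convex and generating $\Lambda$; conformal data $\mathcal{R}$). Then the moment map $\mu_{\mathcal{R}}$ satisfies the transversality condition at every point of $P=\mu_{\mathcal{R}}^{-1}(0)\setminus\{0\}$: for every $p\in P$ and every nonzero $a\in\mathfrak g$ there exists $a'\in\mathfrak g$ with $(I_1\,d\langle(\mu_{\mathcal R})_1,a'\rangle)_p(\mathbf{A}_p(a))\neq 0$.
   Context: $F$ is a 2-torus, Lie algebra $\mathfrak f\cong\mathbb{R}^2$, lattice $\Lambda\cong\mathbb{Z}^2$. $\mathcal{S}=\{u_1,\dots,u_k\}\subset\Lambda$ is an ordered set generating $\Lambda$, with cyclically consecutive elements linearly independent, each $u_i$ either $(p,0)$ with $p>0$ or with positive second coordinate, $u_1=(p,0)$, and convex (i.e. $u_1,\dots,u_k$ are the outward normals of a convex polygon; equivalently the associated compact toric orbifold has negative-definite intersection form). Set $v_1=u_1+u_k$, $v_i=u_i-u_{i-1}$ ($2\le i\le k$), and $\Omega:\mathbb{R}^k\to\mathfrak f$, $e_i\mapsto v_i$; $\mathfrak g=\ker\Omega$ (dimension $k-2$). Conformal data $\mathcal R$: points $\zeta_1,\dots,\zeta_k$ with $|\zeta_i|=1$, $0=\arg\zeta_1<\dots<\arg\zeta_k<2\pi$; $z_i=\zeta_i^{1/2}$ with $0\le\arg z_i<\pi$, $\boldsymbol z=(z_1,\dots,z_k)$, $\mathbb W=\mathrm{span}\{\mathrm{Re}\boldsymbol z,\mathrm{Im}\boldsymbol z\}\subset(\mathbb{R}^k)^*$,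 and $B^*:(\mathbb{R}^k)^*\to\mathfrak g^*$ a linear map with kernel $\mathbb W$. On $\mathbb{H}^k$ with coordinates $q_m=x_m+y_mj$ ($x_m,y_m\in\mathbb C$) and $I_1,I_2,I_3$ = left multiplication by $i,j,k$, let $\mathcal U=\mathbb{H}^k/\{\pm1\}$ (associated bundle of $\mathbb{HP}^{k-1}$). The torus $T^k$ = (maximal torus $\{(\lambda_1,\dots,\lambda_k):\lambda_m\in U(1)\subset\mathbb C\}$ of $Sp(k)$ acting by right multiplication $q_m\mapsto q_m\lambda_m$) modulo $(-1,\dots,-1)$ acts on $\mathcal U$; its Lie algebra is $\mathbb{R}^k$ with $e_m$ generating the rotation of the $m$-th factor, and $\mathbf A(a)$ denotes the vector field on $\mathcal U$ generated by $a\in\mathfrak g\subset\mathbb{R}^k$. Define $\nu_m:\mathcal U\to\mathrm{Im}\mathbb{H}$, $\nu_m(q)=(|x_m|^2-|y_m|^2,\ \mathrm{Re}(2ix_my_m),\ \mathrm{Im}(2ix_my_m))$, $\nu=(\nu_1,\dots,\nu_k):\mathcal U\to(\mathbb{R}^k)^*\otimes\mathrm{Im}\mathbb H$, and $\mu_{\mathcal R}=B^*\circ\nu:\mathcal U\to\mathfrak g^*\otimes\mathrm{Im}\mathbb{H}$, with components $(\mu_{\mathcal R})_1,(\mu_{\mathcal R})_2,(\mu_{\mathcal R})_3$. $I_1$ acts on 1-forms by the transpose action. *)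

theory Defs
  imports "HOL-Analysis.Analysis"
begin

(* Indices run over {1..k}.  Vectors in R^k, (R^k)^* are functions nat => real
   supported on {1..k}.  A point of H^k is q :: nat => complex * complex with
   q m = (x_m, y_m), i.e. q_m = x_m + y_m j. *)

definition det2 :: "real \<times> real \<Rightarrow> real \<times> real \<Rightarrow> real" where
  "det2 a b = fst a * snd b - snd a * fst b"

definition rvec :: "int \<times> int \<Rightarrow> real \<times> real" where
  "rvec w = (real_of_int (fst w), real_of_int (snd w))"

definition supp_in :: "nat \<Rightarrow> (nat \<Rightarrow> real) \<Rightarrow> bool" where
  "supp_in k a \<longleftrightarrow> (\<forall>i. i \<notin> {1..k} \<longrightarrow> a i = 0)"

definition admissible_S :: "nat \<Rightarrow> (nat \<Rightarrow> int \<times> int) \<Rightarrow> bool" where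
  "admissible_S k u \<longleftrightarrow>
     \<comment> \<open>S generates the lattice Z^2\<close>
     (\<forall>w :: int \<times> int. \<exists>c :: nat \<Rightarrow> int.
         w = ((\<Sum>i\<in>{1..k}. c i * fst (u i)), (\<Sum>i\<in>{1..k}. c i * snd (u i))))
     \<comment> \<open>cyclically consecutive elements linearly independent\<close>
   \<and> (\<forall>i\<in>{1..<k}. det2 (rvec (u i)) (rvec (u (i+1))) \<noteq> 0)
   \<and> det2 (rvec (u k)) (rvec (u 1)) \<noteq> 0
     \<comment> \<open>each u_i is (p,0) with p>0 or has positive second coordinate\<close>
   \<and> (\<forall>i\<in>{1..k}. (fst (u i) > 0 \<and> snd (u i) = 0) \<or> snd (u i) > 0)
     \<comment> \<open>u_1 = (p,0)\<close>
   \<and> fst (u 1) > 0 \<and> snd (u 1) = 0"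

text \<open>Convexity: u_1,...,u_k are, in this order, the outward normals of a convex
  polygon, i.e. they turn strictly counterclockwise.\<close>
definition convex_S :: "nat \<Rightarrow> (nat \<Rightarrow> int \<times> int) \<Rightarrow> bool" where
  "convex_S k u \<longleftrightarrow> (\<forall>i\<in>{2..k}. det2 (rvec (u (i-1))) (rvec (u i)) > 0)"

definition vvec :: "nat \<Rightarrow> (nat \<Rightarrow> int \<times> int) \<Rightarrow> nat \<Rightarrow> real \<times> real" where
  "vvec k u i = (if i = 1 then rvec (u 1) + rvec (u k) else rvec (u i) - rvec (u (i-1)))"

definition gset :: "nat \<Rightarrow> (nat \<Rightarrow> int \<times> int) \<Rightarrow> (nat \<Rightarrow> real) set" where
  "gset k u = {a. supp_in k a \<and> (\<Sum>i\<in>{1..k}. a i *\<^sub>R vvec k u i) = 0}"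

text \<open>Conformal data: theta i = arg zeta_i in [0,2pi), zeta_i = cis (theta i).\<close>
definition conformal_data :: "nat \<Rightarrow> (nat \<Rightarrow> real) \<Rightarrow> bool" where
  "conformal_data k \<theta> \<longleftrightarrow> \<theta> 1 = 0 \<and> (\<forall>i\<in>{1..k}. 0 \<le> \<theta> i \<and> \<theta> i < 2 * pi)
     \<and> (\<forall>i\<in>{1..k}. \<forall>j\<in>{1..k}. i < j \<longrightarrow> \<theta> i < \<theta> j)"

text \<open>z_i = zeta_i^(1/2) with 0 <= arg z_i < pi.\<close>
definition zvec :: "(nat \<Rightarrow> real) \<Rightarrow> nat \<Rightarrow> complex" where
  "zvec \<theta> i = cis (\<theta> i / 2)"

definition Wset :: "nat \<Rightarrow> (nat \<Rightarrow> real) \<Rightarrow> (nat \<Rightarrow> real) set" where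
  "Wset k \<theta> = {\<xi>. supp_in k \<xi> \<and>
      (\<exists>s t. \<forall>i\<in>{1..k}. \<xi> i = s * Re (zvec \<theta> i) + t * Im (zvec \<theta> i))}"

text \<open>B^* : (R^k)^* -> g^* linear with kernel W, encoded by the pairing
  Bs xi a = <B^* xi, a> for a in g.\<close>
definition Bstar_ok :: "nat \<Rightarrow> (nat \<Rightarrow> int \<times> int) \<Rightarrow> (nat \<Rightarrow> real)
      \<Rightarrow> ((nat \<Rightarrow> real) \<Rightarrow> (nat \<Rightarrow> real) \<Rightarrow> real) \<Rightarrow> bool" where
  "Bstar_ok k u \<theta> Bs \<longleftrightarrow>
     (\<forall>\<xi> \<eta> a. Bs (\<lambda>i. \<xi> i + \<eta> i) a = Bs \<xi> a + Bs \<eta> a)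
   \<and> (\<forall>c \<xi> a. Bs (\<lambda>i. c * \<xi> i) a = c * Bs \<xi> a)
   \<and> (\<forall>\<xi> a b. Bs \<xi> (\<lambda>i. a i + b i) = Bs \<xi> a + Bs \<xi> b)
   \<and> (\<forall>c \<xi> a. Bs \<xi> (\<lambda>i. c * a i) = c * Bs \<xi> a)
   \<and> (\<forall>\<xi>. supp_in k \<xi> \<longrightarrow> ((\<forall>a\<in>gset k u. Bs \<xi> a = 0) \<longleftrightarrow> \<xi> \<in> Wset k \<theta>))"

text \<open>Components of nu : H^k -> (R^k)^* (x) Im H.\<close>
definition nu1 :: "nat \<Rightarrow> (nat \<Rightarrow> complex \<times> complex) \<Rightarrow> nat \<Rightarrow> real" where
  "nu1 k q m = (if m \<in> {1..k} then (cmod (fst (q m)))\<^sup>2 - (cmod (snd (q m)))\<^sup>2 else 0)"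

definition nu2 :: "nat \<Rightarrow> (nat \<Rightarrow> complex \<times> complex) \<Rightarrow> nat \<Rightarrow> real" where
  "nu2 k q m = (if m \<in> {1..k} then Re (2 * \<i> * fst (q m) * snd (q m)) else 0)"

definition nu3 :: "nat \<Rightarrow> (nat \<Rightarrow> complex \<times> complex) \<Rightarrow> nat \<Rightarrow> real" where
  "nu3 k q m = (if m \<in> {1..k} then Im (2 * \<i> * fst (q m) * snd (q m)) else 0)"

text \<open>P = mu_R^{-1}(0) minus {0} (lifted to H^k; all data are {+-1}-invariant).\<close>
definition Pset :: "nat \<Rightarrow> (nat \<Rightarrow> int \<times> int) \<Rightarrow> ((nat \<Rightarrow> real) \<Rightarrow> (nat \<Rightarrow> real) \<Rightarrow> real)
      \<Rightarrow> (nat \<Rightarrow> complex \<times> complex) set" where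
  "Pset k u Bs = {q. (\<exists>m\<in>{1..k}. q m \<noteq> 0) \<and>
      (\<forall>a\<in>gset k u. Bs (nu1 k q) a = 0 \<and> Bs (nu2 k q) a = 0 \<and> Bs (nu3 k q) a = 0)}"

text \<open>Right action of the torus T^k: q_m |-> q_m lambda_m, i.e.
  (x_m + y_m j) lambda = x_m lambda + y_m conj(lambda) j.\<close>
definition tact :: "(nat \<Rightarrow> complex) \<Rightarrow> (nat \<Rightarrow> complex \<times> complex) \<Rightarrow> nat \<Rightarrow> complex \<times> complex" where
  "tact lam q m = (fst (q m) * lam m, snd (q m) * cnj (lam m))"

definition Afield :: "(nat \<Rightarrow> real) \<Rightarrow> (nat \<Rightarrow> complex \<times> complex) \<Rightarrow> nat \<Rightarrow> complex \<times> complex" where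
  "Afield a q m =
     (vector_derivative (\<lambda>t. fst (tact (\<lambda>j. cis (t * a j)) q m)) (at 0),
      vector_derivative (\<lambda>t. snd (tact (\<lambda>j. cis (t * a j)) q m)) (at 0))"

definition I1 :: "(nat \<Rightarrow> complex \<times> complex) \<Rightarrow> nat \<Rightarrow> complex \<times> complex" where
  "I1 X m = (\<i> * fst (X m), \<i> * snd (X m))"

definition dfun :: "((nat \<Rightarrow> complex \<times> complex) \<Rightarrow> real) \<Rightarrow> (nat \<Rightarrow> complex \<times> complex)
      \<Rightarrow> (nat \<Rightarrow> complex \<times> complex) \<Rightarrow> real" where
  "dfun f p X = deriv (\<lambda>t. f (\<lambda>m. p m + t *\<^sub>R X m)) 0"

end

theory Submission
  imports Defs
begin

text \<open>
  At \<open>p \<in> P\<close> the derivative of \<open>\<langle>\<mu>\<^sub>1, a'\<rangle>\<close> along \<open>I\<^sub>1 A(a)\<close> is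
  \<open>\<langle>B\<^sup>* \<xi>, a'\<rangle>\<close> with \<open>\<xi>\<^sub>m = -2 a\<^sub>m |q\<^sub>m|\<^sup>2\<close>. If this vanishes for all \<open>a' \<in> \<frak>g\<close>, then
  \<open>\<xi> \<in> W\<close>; since also \<open>\<nu>(p) \<in> W \<otimes> Im \<bbbH>\<close>, there are a linear form \<open>\<ell>\<close> and a positive
  semidefinite quadratic form \<open>Q\<close> on \<open>\<complex>\<close> with \<open>a\<^sub>m |q\<^sub>m|\<^sup>2 = \<ell>(z\<^sub>m)\<close> and
  \<open>|q\<^sub>m|\<^sup>2 = |\<nu>\<^sub>m(p)| = Q(z\<^sub>m)\<^sup>1\<^sup>/\<^sup>2\<close>.

  Summation by parts turns \<open>a \<in> \<frak>g = ker \<Omega>\<close> into \<open>\<Sum> (b\<^sub>m - b\<^sub>m\<^sub>+\<^sub>1) u\<^sub>m = 0\<close>, where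
  \<open>b\<close> extends \<open>a\<close> by \<open>b\<^sub>k\<^sub>+\<^sub>1 = -a\<^sub>1\<close>; with \<open>z\<^sub>k\<^sub>+\<^sub>1 = -z\<^sub>1\<close>, \<open>b\<close> is \<open>\<ell>/Q\<^sup>1\<^sup>/\<^sup>2\<close> sampled
  at points turning counterclockwise through a half-turn. Along such a sequence the differences
  \<open>b\<^sub>m - b\<^sub>m\<^sub>+\<^sub>1\<close> change sign at most once: for definite \<open>Q\<close> their signs are those of
  \<open>\<ell>\<close> on the (counterclockwise) bisectors of consecutive points, for degenerate \<open>Q = \<tau>\<^sup>2\<close>
  they are governed by the single sign change of \<open>\<tau>\<close>. Convexity makes the \<open>u\<^sub>m\<close> turn
  counterclockwise as well, so pairing the relation with the \<open>u\<^sub>j\<close> at the sign change leaves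
  terms of one sign summing to zero. Hence \<open>a\<close> is constant with \<open>a\<^sub>k = -a\<^sub>1\<close>, i.e. \<open>a = 0\<close>.
\<close>

lemma det2_antisym: "det2 b a = - det2 a b"
  by (simp add: det2_def)

lemma det2_zero_left [simp]: "det2 0 W = 0"
  and det2_zero_right [simp]: "det2 W 0 = 0"
  by (simp_all add: det2_def)

lemma det2_sum_scaleR_left:
  "det2 (\<Sum>i\<in>I. d i *\<^sub>R U i) W = (\<Sum>i\<in>I. d i * det2 (U i) W)"
  unfolding det2_def fst_sum snd_sum
  by (simp add: sum_distrib_right sum_subtractf right_diff_distrib mult.assoc)

lemma det2_pluecker: "det2 a b * det2 c d - det2 a c * det2 b d + det2 a d * det2 b c = 0"
  by (simp add: det2_def algebra_simps)

lemma det2_parallel: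
  assumes "det2 N a = 0" and "a \<noteq> 0"
  obtains c where "\<And>x. det2 N x = c * det2 a x"
proof
  have "(fst a)\<^sup>2 + (snd a)\<^sup>2 \<noteq> 0"
    using assms(2) by (simp add: prod_eq_iff)
  moreover have "((fst a)\<^sup>2 + (snd a)\<^sup>2) * det2 N x
      = (fst N * fst a + snd N * snd a) * det2 a x + det2 N a * (fst a * fst x + snd a * snd x)" for x
    by (simp add: det2_def power2_eq_square algebra_simps)
  ultimately show "det2 N x = (fst N * fst a + snd N * snd a) / ((fst a)\<^sup>2 + (snd a)\<^sup>2) * det2 a x"
    for x using assms(1) by (simp add: field_simps)
qed

section \<open>Sequences with at most one sign change\<close>

definition at_most_one_sign_change :: "nat \<Rightarrow> (nat \<Rightarrow> real) \<Rightarrow> bool" where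
  "at_most_one_sign_change k d \<longleftrightarrow>
     (\<forall>i l. 1 \<le> i \<longrightarrow> i < l \<longrightarrow> l \<le> k \<longrightarrow> \<not> (d i > 0 \<and> d l < 0))
   \<or> (\<forall>i l. 1 \<le> i \<longrightarrow> i < l \<longrightarrow> l \<le> k \<longrightarrow> \<not> (d i < 0 \<and> d l > 0))"

lemma at_most_one_sign_change_uminus [simp]:
  "at_most_one_sign_change k (\<lambda>i. - d i) \<longleftrightarrow> at_most_one_sign_change k d"
  unfolding at_most_one_sign_change_def by auto

lemma at_most_one_sign_change_sgn_cong:
  assumes "\<And>i. i \<in> {1..k} \<Longrightarrow> sgn (d i) = sgn (e i)"
    and "at_most_one_sign_change k e"
  shows "at_most_one_sign_change k d"
proof -
  have "d i > 0 \<longleftrightarrow> e i > 0" "d i < 0 \<longleftrightarrow> e i < 0" if "i \<in> {1..k}" for i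
    using assms(1)[OF that] by (auto simp: sgn_if split: if_splits)
  with assms(2) show ?thesis
    unfolding at_most_one_sign_change_def by (meson atLeastAtMost_iff less_imp_le_nat order.trans)
qed

lemma at_most_one_sign_change_if_pivot:
  assumes "\<And>i. i \<in> {1..k} \<Longrightarrow> i < x \<Longrightarrow> d i \<le> 0"
    and "\<And>i. i \<in> {1..k} \<Longrightarrow> x < i \<Longrightarrow> d i \<ge> 0"
  shows "at_most_one_sign_change k d"
  unfolding at_most_one_sign_change_def
  by (metis assms atLeastAtMost_iff not_le order.strict_trans2 order.trans less_imp_le_nat)

lemma at_most_one_sign_change_two_support:
  assumes "\<And>i. i \<in> {1..k} \<Longrightarrow> i \<noteq> x \<Longrightarrow> i \<noteq> y \<Longrightarrow> d i = 0"
  shows "at_most_one_sign_change k d"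
proof -
  have ordered: "at_most_one_sign_change k d" if "x \<le> y"
      "\<And>i. i \<in> {1..k} \<Longrightarrow> i \<noteq> x \<Longrightarrow> i \<noteq> y \<Longrightarrow> d i = 0" for x y
  proof (cases "d y \<ge> 0")
    case True
    show ?thesis
    proof (rule at_most_one_sign_change_if_pivot[where x = x])
      fix i assume "i \<in> {1..k}" "x < i"
      then show "d i \<ge> 0" using that True by (cases "i = y") auto
    qed (use that in auto)
  next
    case False
    have "at_most_one_sign_change k (\<lambda>i. - d i)"
    proof (rule at_most_one_sign_change_if_pivot[where x = x])
      fix i assume "i \<in> {1..k}" "x < i"
      then show "- d i \<ge> 0" using that False by (cases "i = y") auto
    qed (use that in auto)
    then show ?thesis by simp
  qed
  show ?thesis
    using ordered[of x y] ordered[of y x] assms by (cases "x \<le> y") auto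
qed

lemma sgn_eq_if_mult_pos: "x * y > 0 \<Longrightarrow> sgn x = sgn (y :: real)"
  by (auto simp: zero_less_mult_iff)

lemma sgn_eq_minus_if_mult_neg: "x * y < 0 \<Longrightarrow> sgn x = - sgn (y :: real)"
  by (auto simp: mult_less_0_iff)

lemma mult_pos_if_sgn_eq: "sgn x = sgn y \<Longrightarrow> x \<noteq> 0 \<Longrightarrow> x * (y :: real) > 0"
  by (auto simp: sgn_if zero_less_mult_iff split: if_splits)

section \<open>Counterclockwise sequences of vectors\<close>

lemma det2_pos_trans:
  assumes a: "snd a > 0 \<or> (snd a = 0 \<and> fst a > 0)" and b: "snd b > 0 \<or> (snd b = 0 \<and> fst b > 0)"
    and c: "snd c > 0 \<or> (snd c = 0 \<and> fst c > 0)"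
    and ab: "det2 a b > 0" and bc: "det2 b c > 0"
  shows "det2 a c > 0"
proof -
  have b2: "snd b > 0"
  proof (rule ccontr)
    assume "\<not> snd b > 0"
    then have "snd b = 0" "fst b > 0" using b by auto
    then have "det2 a b = - (snd a * fst b)" by (simp add: det2_def)
    moreover have "snd a * fst b \<ge> 0" using a \<open>fst b > 0\<close> by auto
    ultimately show False using ab by linarith
  qed
  have "snd a > 0 \<or> snd c > 0"
  proof (rule ccontr)
    assume "\<not> (snd a > 0 \<or> snd c > 0)"
    then have "snd c = 0" "fst c > 0" using c by auto
    then have "det2 b c = - (snd b * fst c)" by (simp add: det2_def)
    moreover have "snd b * fst c > 0" using b2 \<open>fst c > 0\<close> by simp
    ultimately show False using bc by linarith
  qed
  moreover have "det2 a c * snd b = det2 a b * snd c + snd a * det2 b c"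
    by (simp add: det2_def algebra_simps)
  moreover have "det2 a b * snd c \<ge> 0" "snd a * det2 b c \<ge> 0"
    using a c ab bc by auto
  moreover have "det2 a b * snd c > 0 \<or> snd a * det2 b c > 0"
    using \<open>snd a > 0 \<or> snd c > 0\<close> ab bc by auto
  ultimately have "det2 a c * snd b > 0" by linarith
  then show ?thesis using b2 by (simp add: zero_less_mult_iff)
qed

lemma ccw_combination_pivot:
  fixes U :: "nat \<Rightarrow> real \<times> real"
  assumes ccw: "\<And>i j. i \<in> {1..k} \<Longrightarrow> j \<in> {1..k} \<Longrightarrow> i < j \<Longrightarrow> det2 (U i) (U j) > 0"
    and k2: "2 \<le> k" and comb: "(\<Sum>i=1..k. d i *\<^sub>R U i) = 0" and j: "j \<in> {1..k}"
    and before: "\<And>i. i \<in> {1..k} \<Longrightarrow> i < j \<Longrightarrow> d i \<le> 0"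
    and after: "\<And>i. i \<in> {1..k} \<Longrightarrow> j < i \<Longrightarrow> d i \<ge> 0"
    and i: "i \<in> {1..k}"
  shows "d i = 0"
proof -
  have det_ne: "det2 (U i) (U j) \<noteq> 0" if "i \<in> {1..k}" "i \<noteq> j" for i
    using ccw[of i j] ccw[of j i] that j det2_antisym[of "U i"] by (cases "i < j") auto
  have term_nonpos: "d i * det2 (U i) (U j) \<le> 0" if "i \<in> {1..k}" for i
  proof -
    consider "i < j" | "i = j" | "j < i" by linarith
    then show ?thesis
    proof cases
      case 1 with that before ccw[of i j] j show ?thesis by (simp add: mult_nonpos_nonneg)
    next
      case 3
      then have "det2 (U i) (U j) < 0" using ccw[of j i] that j det2_antisym[of "U i"] by simp
      with 3 that after show ?thesis by (simp add: mult_nonneg_nonpos)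
    qed (simp add: det2_def)
  qed
  have "(\<Sum>i=1..k. d i * det2 (U i) (U j)) = 0"
    using arg_cong[OF comb, of "\<lambda>x. det2 x (U j)"] by (simp add: det2_sum_scaleR_left)
  then have zero_terms: "d i * det2 (U i) (U j) = 0" if "i \<in> {1..k}" for i
    using sum_nonneg_eq_0_iff[of "{1..k}" "\<lambda>i. - (d i * det2 (U i) (U j))"] term_nonpos that
    by (simp add: sum_negf)
  then have off_pivot: "d i = 0" if "i \<in> {1..k}" "i \<noteq> j" for i
    using zero_terms[OF that(1)] det_ne[OF that] by simp
  have "(\<Sum>i=1..k. d i *\<^sub>R U i) = d j *\<^sub>R U j"
    using j off_pivot by (subst sum.remove[of _ j]) (auto intro: sum.neutral)
  moreover obtain i0 where "i0 \<in> {1..k}" "i0 \<noteq> j"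
    using k2 j by (cases "j = 1") (auto intro: that[of 1] that[of 2])
  then have "U j \<noteq> 0" using det_ne[of i0] by (auto simp: det2_def)
  ultimately have "d j = 0" using comb by simp
  then show ?thesis using off_pivot i by (cases "i = j") auto
qed

lemma ccw_combination_eq_zero:
  fixes U :: "nat \<Rightarrow> real \<times> real"
  assumes ccw: "\<And>i j. i \<in> {1..k} \<Longrightarrow> j \<in> {1..k} \<Longrightarrow> i < j \<Longrightarrow> det2 (U i) (U j) > 0"
    and k2: "2 \<le> k" and comb: "(\<Sum>i=1..k. d i *\<^sub>R U i) = 0"
    and sign: "at_most_one_sign_change k d" and i: "i \<in> {1..k}"
  shows "d i = 0"
proof -
  have no_descent: "e i = 0"
    if "(\<Sum>i=1..k. e i *\<^sub>R U i) = 0"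
      and "\<forall>i l. 1 \<le> i \<longrightarrow> i < l \<longrightarrow> l \<le> k \<longrightarrow> \<not> (e i > 0 \<and> e l < 0)" for e
  proof (cases "\<exists>i\<in>{1..k}. e i > 0")
    case True
    define j where "j = (LEAST i. i \<in> {1..k} \<and> e i > 0)"
    obtain i0 where "i0 \<in> {1..k} \<and> e i0 > 0" using True by blast
    then have j: "j \<in> {1..k} \<and> e j > 0" unfolding j_def by (rule LeastI)
    have least: "\<And>i. i \<in> {1..k} \<and> e i > 0 \<Longrightarrow> j \<le> i"
      unfolding j_def by (rule Least_le)
    show ?thesis
      by (rule ccw_combination_pivot[OF ccw k2 that(1), of j])
        (use j least that(2) i in \<open>force+\<close>)
  next
    case False
    show ?thesis
      by (rule ccw_combination_pivot[OF ccw k2 that(1), of k]) (use False k2 i in force)+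
  qed
  show ?thesis
    using sign unfolding at_most_one_sign_change_def
  proof
    assume "\<forall>i l. 1 \<le> i \<longrightarrow> i < l \<longrightarrow> l \<le> k \<longrightarrow> \<not> (d i < 0 \<and> d l > 0)"
    moreover have "(\<Sum>i=1..k. (- d i) *\<^sub>R U i) = 0"
      using comb by (simp add: sum_negf)
    ultimately have "- d i = 0" using no_descent[of "\<lambda>i. - d i"] by auto
    then show ?thesis by simp
  qed (use no_descent comb in blast)
qed

lemma at_most_one_sign_change_det2_ccw:
  fixes M :: "nat \<Rightarrow> real \<times> real"
  assumes side: "\<And>i. i \<in> {1..k} \<Longrightarrow> det2 a (M i) > 0"
    and ccw: "\<And>i l. i \<in> {1..k} \<Longrightarrow> l \<in> {1..k} \<Longrightarrow> i < l \<Longrightarrow> det2 (M i) (M l) \<ge> 0"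
  shows "at_most_one_sign_change k (\<lambda>i. det2 (M i) w)"
proof -
  have pluecker: "det2 a (M l) * det2 (M i) w - det2 a (M i) * det2 (M l) w
      = det2 a w * det2 (M i) (M l)" for l i
    by (simp add: det2_def algebra_simps)
  show ?thesis
  proof (cases "det2 a w \<ge> 0")
    case True
    have "\<not> (det2 (M i) w < 0 \<and> det2 (M l) w > 0)" if "1 \<le> i" "i < l" "l \<le> k" for i l
    proof
      assume g: "det2 (M i) w < 0 \<and> det2 (M l) w > 0"
      have "det2 a (M l) * det2 (M i) w < 0" using side[of l] that g by (simp add: mult_pos_neg)
      moreover have "det2 a (M i) * det2 (M l) w > 0" using side[of i] that g by simp
      moreover have "det2 a w * det2 (M i) (M l) \<ge> 0" using True ccw[of i l] that by simp
      ultimately show False using pluecker[of l i] by linarith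
    qed
    then show ?thesis unfolding at_most_one_sign_change_def by blast
  next
    case False
    have "\<not> (det2 (M i) w > 0 \<and> det2 (M l) w < 0)" if "1 \<le> i" "i < l" "l \<le> k" for i l
    proof
      assume g: "det2 (M i) w > 0 \<and> det2 (M l) w < 0"
      have "det2 a (M l) * det2 (M i) w > 0" using side[of l] that g by simp
      moreover have "det2 a (M i) * det2 (M l) w < 0" using side[of i] that g by (simp add: mult_pos_neg)
      moreover have "det2 a w * det2 (M i) (M l) \<le> 0"
        using False ccw[of i l] that by (simp add: mult_nonpos_nonneg)
      ultimately show False using pluecker[of l i] by linarith
    qed
    then show ?thesis unfolding at_most_one_sign_change_def by blast
  qed
qed

section \<open>Quadratic forms in the plane\<close>

definition sym_form :: "real \<Rightarrow> real \<Rightarrow> real \<Rightarrow> real \<times> real \<Rightarrow> real \<times> real \<Rightarrow> real" where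
  "sym_form A B C x y = A * fst x * fst y + B * (fst x * snd y + snd x * fst y) + C * snd x * snd y"

lemma sym_form_pos:
  assumes "A \<ge> 0" and "A * C - B\<^sup>2 > 0" and "x \<noteq> 0"
  shows "sym_form A B C x x > 0"
proof -
  have "A \<noteq> 0" using assms(2) by auto
  with assms(1) have A: "A > 0" by simp
  have "A * sym_form A B C x x = (A * fst x + B * snd x)\<^sup>2 + (A * C - B\<^sup>2) * (snd x)\<^sup>2"
    by (simp add: sym_form_def power2_eq_square algebra_simps)
  also have "\<dots> > 0"
  proof (cases "snd x = 0")
    case True
    then have "fst x \<noteq> 0" using assms(3) by (simp add: prod_eq_iff)
    then show ?thesis using True A by simp
  next
    case False
    then show ?thesis using assms(2) by (simp add: add_nonneg_pos)
  qed
  finally show ?thesis using A by (simp add: zero_less_mult_iff)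
qed

lemma sym_form_represents_det2:
  assumes "A * C - B\<^sup>2 \<noteq> 0"
  obtains w where "\<And>x. det2 L x = sym_form A B C w x"
proof
  define G where "G = A * C - B\<^sup>2"
  define w where "w = ((- C * snd L - B * fst L) / G, (A * fst L + B * snd L) / G)"
  have G: "G \<noteq> 0" using assms unfolding G_def .
  have wG: "fst w * G = - C * snd L - B * fst L" "snd w * G = A * fst L + B * snd L"
    using G unfolding w_def by simp_all
  have "(A * fst w + B * snd w + snd L) * G = A * (fst w * G) + B * (snd w * G) + snd L * G"
    by (simp add: algebra_simps)
  also have "\<dots> = 0"
    unfolding wG by (simp add: G_def algebra_simps power2_eq_square)
  finally have w1: "A * fst w + B * snd w = - snd L" using G by simp
  have "(B * fst w + C * snd w - fst L) * G = B * (fst w * G) + C * (snd w * G) - fst L * G"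
    by (simp add: algebra_simps)
  also have "\<dots> = 0"
    unfolding wG by (simp add: G_def algebra_simps power2_eq_square)
  finally have w2: "B * fst w + C * snd w = fst L" using G by simp
  have "sym_form A B C w x = (A * fst w + B * snd w) * fst x + (B * fst w + C * snd w) * snd x" for x
    by (simp add: sym_form_def algebra_simps)
  then show "det2 L x = sym_form A B C w x" for x
    by (simp add: w1 w2 det2_def)
qed

lemma sym_form_degenerate_square:
  assumes "A \<ge> 0" and "C \<ge> 0" and "B\<^sup>2 = A * C"
  obtains N where "\<And>x. sym_form A B C x x = (det2 N x)\<^sup>2"
proof (cases "A = 0")
  case True
  then have "B = 0" using assms(3) by simp
  then show ?thesis
    using True assms(2) by (intro that[of "(sqrt C, 0)"])
      (simp add: sym_form_def det2_def power_mult_distrib power2_eq_square)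
next
  case False
  then have A: "A > 0" using assms(1) by simp
  show ?thesis
  proof (rule that[of "(B / sqrt A, - sqrt A)"])
    fix x :: "real \<times> real"
    have "det2 (B / sqrt A, - sqrt A) x = (A * fst x + B * snd x) / sqrt A"
      using A by (simp add: det2_def field_simps)
    then have "A * (det2 (B / sqrt A, - sqrt A) x)\<^sup>2 = (A * fst x + B * snd x)\<^sup>2"
      using A by (simp add: power_divide)
    moreover have "A * sym_form A B C x x = (A * fst x + B * snd x)\<^sup>2"
      using assms(3) by (simp add: sym_form_def power2_eq_square algebra_simps)
    ultimately show "sym_form A B C x x = (det2 (B / sqrt A, - sqrt A) x)\<^sup>2"
      using A by (metis mult_cancel_left order_less_irrefl)
  qed
qed

text \<open>If \<open>p, r\<close> are the \<open>Q\<close>-lengths of \<open>P, S\<close>, the chord \<open>r P - p S\<close> is \<open>Q\<close>-orthogonal to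
  the bisector \<open>r P + p S\<close>; in the plane this yields the following identity.\<close>

lemma sym_form_chord_identity:
  assumes "p\<^sup>2 = sym_form A B C P P" and "r\<^sup>2 = sym_form A B C S S"
  shows "2 * p * r * det2 P S * (r * sym_form A B C w P - p * sym_form A B C w S)
    + sym_form A B C (r *\<^sub>R P - p *\<^sub>R S) (r *\<^sub>R P - p *\<^sub>R S) * det2 (r *\<^sub>R P + p *\<^sub>R S) w = 0"
proof -
  obtain P1 P2 S1 S2 w1 w2 where PSw: "P = (P1, P2)" "S = (S1, S2)" "w = (w1, w2)"
    by (metis prod.exhaust)
  have "p\<^sup>2 = A * P1 * P1 + B * (P1 * P2 + P2 * P1) + C * P2 * P2"
    "r\<^sup>2 = A * S1 * S1 + B * (S1 * S2 + S2 * S1) + C * S2 * S2"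
    using assms unfolding PSw sym_form_def by simp_all
  then show ?thesis unfolding PSw sym_form_def det2_def by (simp add: algebra_simps) algebra
qed

section \<open>A linear form over a quadratic seminorm along a half-turn\<close>

text \<open>\<open>b\<^sub>m\<close> is the linear form \<open>det2 L\<close> divided by the \<open>Q\<close>-length \<open>R\<^sub>m\<close>, sampled at points
  \<open>V\<^sub>1, \<dots>, V\<^sub>k\<close> turning counterclockwise and closed up by \<open>V\<^sub>k\<^sub>+\<^sub>1 = -V\<^sub>1\<close>; where
  \<open>R\<^sub>m = 0\<close>, \<open>b\<^sub>m\<close> is unconstrained.\<close>
locale half_turn_quotient =
  fixes k :: nat and V :: "nat \<Rightarrow> real \<times> real" and A B C :: real and L :: "real \<times> real"
    and R b :: "nat \<Rightarrow> real"
  assumes k2: "2 \<le> k"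
    and ccw: "\<And>i j. i \<in> {1..k} \<Longrightarrow> j \<in> {1..k} \<Longrightarrow> i < j \<Longrightarrow> det2 (V i) (V j) > 0"
    and antipodal: "V (k + 1) = - V 1"
    and psd: "A \<ge> 0" "C \<ge> 0" "B\<^sup>2 \<le> A * C"
    and R_nonneg: "\<And>m. m \<in> {1..k + 1} \<Longrightarrow> R m \<ge> 0"
    and R_sq: "\<And>m. m \<in> {1..k + 1} \<Longrightarrow> (R m)\<^sup>2 = sym_form A B C (V m) (V m)"
    and b_R: "\<And>m. m \<in> {1..k + 1} \<Longrightarrow> b m * R m = det2 L (V m)"
    and R_pos: "\<exists>m\<in>{1..k}. R m > 0"
begin

lemma det_last: "det2 (V m) (V (k + 1)) = det2 (V 1) (V m)"
  unfolding antipodal by (simp add: det2_def)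

lemma det_succ_pos: "i \<in> {1..k} \<Longrightarrow> det2 (V i) (V (i + 1)) > 0"
  using ccw[of i "i + 1"] ccw[of 1 k] k2 det_last by (cases "i = k") auto

lemma det_nonneg: "1 \<le> i \<Longrightarrow> i \<le> j \<Longrightarrow> j \<le> k + 1 \<Longrightarrow> det2 (V i) (V j) \<ge> 0"
  using ccw[of i j] ccw[of 1 i] det_last[of i]
  by (cases "i = j"; cases "j = k + 1"; cases "i = 1") (auto simp: det2_def)

lemma V_nonzero: "m \<in> {1..k + 1} \<Longrightarrow> V m \<noteq> 0"
  using det_succ_pos[of m] det_succ_pos[of k] k2
  by (cases "m = k + 1") (auto simp: det2_def)

lemma diff_scaled:
  "i \<in> {1..k} \<Longrightarrow> (b i - b (i + 1)) * R i * R (i + 1) = R (i + 1) * det2 L (V i) - R i * det2 L (V (i + 1))"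
  using b_R[of i] b_R[of "i + 1"] by (simp add: algebra_simps)

lemma R_pos_if_definite:
  assumes "A * C - B\<^sup>2 > 0" and "m \<in> {1..k + 1}"
  shows "R m > 0"
proof -
  have "(R m)\<^sup>2 > 0"
    using sym_form_pos[OF psd(1) assms(1) V_nonzero[OF assms(2)]] R_sq[OF assms(2)] by simp
  then show ?thesis using R_nonneg[OF assms(2)] by (simp add: less_le)
qed

definition bisector :: "nat \<Rightarrow> real \<times> real" where
  "bisector i = R (i + 1) *\<^sub>R V i + R i *\<^sub>R V (i + 1)"

lemma sgn_diff_definite:
  assumes definite: "A * C - B\<^sup>2 > 0" and w: "\<And>x. det2 L x = sym_form A B C w x"
    and i: "i \<in> {1..k}"
  shows "sgn (b i - b (i + 1)) = sgn (- det2 (bisector i) w)"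
proof -
  define p r P S where "p = R i" "r = R (i + 1)" "P = V i" "S = V (i + 1)"
  have pr: "p > 0" "r > 0" and PS: "det2 P S > 0"
    using R_pos_if_definite[OF definite, of i] R_pos_if_definite[OF definite, of "i + 1"]
      det_succ_pos[OF i] i
    unfolding p_r_P_S_def by auto
  have "det2 P (r *\<^sub>R P - p *\<^sub>R S) = - p * det2 P S"
    by (simp add: det2_def algebra_simps)
  then have "r *\<^sub>R P - p *\<^sub>R S \<noteq> 0" using pr PS by auto
  then have chord: "sym_form A B C (r *\<^sub>R P - p *\<^sub>R S) (r *\<^sub>R P - p *\<^sub>R S) > 0"
    by (rule sym_form_pos[OF psd(1) definite])
  have E: "r * sym_form A B C w P - p * sym_form A B C w S = p * r * (b i - b (i + 1))"
    using diff_scaled[OF i] unfolding p_r_P_S_def w[symmetric] by (simp add: algebra_simps)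
  have "2 * p * r * det2 P S * (r * sym_form A B C w P - p * sym_form A B C w S)
      + sym_form A B C (r *\<^sub>R P - p *\<^sub>R S) (r *\<^sub>R P - p *\<^sub>R S) * det2 (r *\<^sub>R P + p *\<^sub>R S) w = 0"
    by (rule sym_form_chord_identity) (use R_sq i in \<open>auto simp: p_r_P_S_def\<close>)
  moreover have "2 * p * r * det2 P S * (p * r * (b i - b (i + 1)))
      = (2 * (p * r)\<^sup>2 * det2 P S) * (b i - b (i + 1))"
    by (simp add: power2_eq_square algebra_simps)
  moreover have "bisector i = r *\<^sub>R P + p *\<^sub>R S"
    unfolding bisector_def p_r_P_S_def by simp
  ultimately have "(2 * (p * r)\<^sup>2 * det2 P S) * (b i - b (i + 1))
      = sym_form A B C (r *\<^sub>R P - p *\<^sub>R S) (r *\<^sub>R P - p *\<^sub>R S) * (- det2 (bisector i) w)"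
    unfolding E by (simp add: algebra_simps)
  then have "sgn (2 * (p * r)\<^sup>2 * det2 P S) * sgn (b i - b (i + 1))
      = sgn (sym_form A B C (r *\<^sub>R P - p *\<^sub>R S) (r *\<^sub>R P - p *\<^sub>R S)) * sgn (- det2 (bisector i) w)"
    unfolding sgn_mult[symmetric] by (rule arg_cong)
  then show ?thesis using pr PS chord by simp
qed

lemma bisector_side:
  assumes "\<And>m. m \<in> {1..k + 1} \<Longrightarrow> R m > 0" and i: "i \<in> {1..k}"
  shows "det2 (V 1) (bisector i) > 0"
proof -
  have "det2 (V 1) (bisector i) = R (i + 1) * det2 (V 1) (V i) + R i * det2 (V 1) (V (i + 1))"
    unfolding bisector_def by (simp add: det2_def algebra_simps)
  moreover have "R (i + 1) * det2 (V 1) (V i) \<ge> 0" "R i * det2 (V 1) (V (i + 1)) \<ge> 0"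
    using det_nonneg[of 1 i] det_nonneg[of 1 "i + 1"] assms(1)[of i] assms(1)[of "i + 1"] i
    by simp_all
  moreover have "R (i + 1) * det2 (V 1) (V i) > 0 \<or> R i * det2 (V 1) (V (i + 1)) > 0"
  proof (cases "i = k")
    case True
    then show ?thesis using ccw[of 1 k] k2 assms(1)[of "k + 1"] by simp
  next
    case False
    then show ?thesis using ccw[of 1 "i + 1"] i assms(1)[of i] by simp
  qed
  ultimately show ?thesis by linarith
qed

lemma bisector_ccw:
  assumes "i \<in> {1..k}" "l \<in> {1..k}" "i < l"
  shows "det2 (bisector i) (bisector l) \<ge> 0"
proof -
  have "det2 (bisector i) (bisector l)
      = R (i + 1) * R (l + 1) * det2 (V i) (V l) + R (i + 1) * R l * det2 (V i) (V (l + 1))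
      + R i * R (l + 1) * det2 (V (i + 1)) (V l) + R i * R l * det2 (V (i + 1)) (V (l + 1))"
    unfolding bisector_def by (simp add: det2_def algebra_simps)
  moreover have "R (i + 1) * R (l + 1) * det2 (V i) (V l) \<ge> 0"
    "R (i + 1) * R l * det2 (V i) (V (l + 1)) \<ge> 0"
    "R i * R (l + 1) * det2 (V (i + 1)) (V l) \<ge> 0"
    "R i * R l * det2 (V (i + 1)) (V (l + 1)) \<ge> 0"
    using det_nonneg[of i l] det_nonneg[of i "l + 1"] det_nonneg[of "i + 1" l]
      det_nonneg[of "i + 1" "l + 1"] R_nonneg[of i] R_nonneg[of "i + 1"] R_nonneg[of l]
      R_nonneg[of "l + 1"] assms
    by simp_all
  ultimately show ?thesis by linarith
qed

lemma at_most_one_sign_change_definite: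
  assumes definite: "A * C - B\<^sup>2 > 0"
  shows "at_most_one_sign_change k (\<lambda>i. b i - b (i + 1))"
proof -
  obtain w where w: "\<And>x. det2 L x = sym_form A B C w x"
    using sym_form_represents_det2 definite by (metis less_irrefl)
  have "at_most_one_sign_change k (\<lambda>i. det2 (bisector i) w)"
    by (rule at_most_one_sign_change_det2_ccw[OF bisector_side[OF R_pos_if_definite[OF definite]] bisector_ccw])
  then show ?thesis
    by (intro at_most_one_sign_change_sgn_cong[OF sgn_diff_definite[OF definite w]]) simp_all
qed

end

text \<open>A degenerate \<open>Q\<close> is the square of a linear form \<open>\<tau> = det2 N\<close>, so \<open>b = \<plusminus>\<ell>/\<tau>\<close>
  on each arc where \<open>\<tau>\<close> keeps its sign.\<close>
locale half_turn_quotient_degenerate = half_turn_quotient +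
  fixes N :: "real \<times> real"
  assumes R_abs: "\<And>m. m \<in> {1..k + 1} \<Longrightarrow> R m = \<bar>det2 N (V m)\<bar>"
begin

abbreviation tau :: "nat \<Rightarrow> real" where
  "tau m \<equiv> det2 N (V m)"

lemma tau_last: "tau (k + 1) = - tau 1"
  unfolding antipodal by (simp add: det2_def)

lemma det_same_side:
  assumes "i \<in> {1..k}" "j \<in> {1..k}" "i \<noteq> j" "i + 1 \<noteq> j" "\<not> (j = 1 \<and> i = k)"
  shows "det2 (V j) (V i) * det2 (V j) (V (i + 1)) > 0"
proof (cases "j < i")
  case True
  have "det2 (V j) (V (i + 1)) > 0"
  proof (cases "i = k")
    case True
    then have "1 < j" using assms(2,5) by auto
    then show ?thesis using ccw[of 1 j] det_last[of j] assms(2) True by simp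
  next
    case False
    then show ?thesis using ccw[of j "i + 1"] \<open>j < i\<close> assms(1,2) by simp
  qed
  moreover have "det2 (V j) (V i) > 0" using ccw[of j i] True assms(1,2) by simp
  ultimately show ?thesis by simp
next
  case False
  then have "i + 1 < j" using assms(3,4) by simp
  then have "det2 (V i) (V j) > 0" "det2 (V (i + 1)) (V j) > 0"
    using ccw[of i j] ccw[of "i + 1" j] assms(1,2) by auto
  then have "det2 (V j) (V i) < 0" "det2 (V j) (V (i + 1)) < 0"
    using det2_antisym[of "V j" "V i"] det2_antisym[of "V j" "V (i + 1)"] by simp_all
  then show ?thesis by (simp add: mult_neg_neg)
qed

lemma sgn_diff_degenerate:
  assumes i: "i \<in> {1..k}" and same_sign: "tau i * tau (i + 1) > 0"
  shows "sgn (b i - b (i + 1)) = sgn (det2 L N) * sgn (tau i)"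
proof -
  have pluecker: "det2 L (V i) * tau (i + 1) - det2 L (V (i + 1)) * tau i
      = det2 L N * det2 (V i) (V (i + 1))"
    by (simp add: det2_def algebra_simps)
  have "(b i - b (i + 1)) * (\<bar>tau i\<bar> * \<bar>tau (i + 1)\<bar>)
      = sgn (tau i) * (det2 L N * det2 (V i) (V (i + 1)))"
  proof (cases "tau i > 0")
    case True
    then have "tau (i + 1) > 0" using same_sign by (simp add: zero_less_mult_iff)
    then show ?thesis
      using diff_scaled[OF i] R_abs[of i] R_abs[of "i + 1"] i True pluecker
      by (simp add: algebra_simps)
  next
    case False
    then have "tau i < 0" "tau (i + 1) < 0" using same_sign by (auto simp: zero_less_mult_iff)
    then show ?thesis
      using diff_scaled[OF i] R_abs[of i] R_abs[of "i + 1"] i pluecker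
      by (simp add: algebra_simps)
  qed
  then have "sgn ((b i - b (i + 1)) * (\<bar>tau i\<bar> * \<bar>tau (i + 1)\<bar>))
      = sgn (sgn (tau i) * (det2 L N * det2 (V i) (V (i + 1))))"
    by simp
  moreover have "tau i \<noteq> 0" "tau (i + 1) \<noteq> 0" using same_sign by auto
  ultimately show ?thesis using det_succ_pos[OF i] by (simp add: sgn_mult)
qed

lemma at_most_one_sign_change_degenerate_zero:
  assumes j: "j \<in> {1..k}" and zero: "tau j = 0"
  shows "at_most_one_sign_change k (\<lambda>i. b i - b (i + 1))"
proof -
  obtain c where c: "\<And>x. det2 N x = c * det2 (V j) x"
    using det2_parallel[OF zero V_nonzero] j by auto
  have "c \<noteq> 0"
    using R_pos R_abs c by fastforce
  obtain j' where j': "j' \<in> {1..k}" "j' \<noteq> j"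
    using k2 j by (cases "j = 1") (auto intro: that[of 1] that[of 2])
  have "det2 L (V j) = 0" using b_R[of j] R_abs[of j] j zero by simp
  then have "det2 L N * det2 (V j) (V j') = 0"
    using det2_pluecker[of L "V j" N "V j'"] zero det2_antisym[of N "V j"] by simp
  moreover have "det2 (V j) (V j') \<noteq> 0"
    using ccw[of j j'] ccw[of j' j] j' j det2_antisym[of "V j"] by (cases "j < j'") auto
  ultimately have D: "det2 L N = 0" by simp
  have "b i - b (i + 1) = 0"
    if "i \<in> {1..k}" "i \<noteq> j" "i + 1 \<noteq> j" "\<not> (j = 1 \<and> i = k)" for i
  proof -
    have "tau i * tau (i + 1) = c\<^sup>2 * (det2 (V j) (V i) * det2 (V j) (V (i + 1)))"
      by (simp add: c power2_eq_square algebra_simps)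
    also have "\<dots> > 0" using det_same_side[OF that(1) j that(2-4)] \<open>c \<noteq> 0\<close> by simp
    finally show ?thesis using sgn_diff_degenerate[OF that(1)] D by (simp add: sgn_zero_iff)
  qed
  then show ?thesis
    by (intro at_most_one_sign_change_two_support[where x = j and y = "if j = 1 then k else j - 1"])
      (auto split: if_splits)
qed

lemma tau_sign_persists:
  assumes "2 \<le> j" "j < m" "m \<le> k" and "tau j * tau 1 < 0"
  shows "tau m * tau 1 \<le> 0"
proof (rule ccontr)
  assume "\<not> ?thesis"
  then have pos: "tau m * tau 1 > 0" by simp
  have "tau 1 * det2 (V j) (V m) - tau j * det2 (V 1) (V m) + tau m * det2 (V 1) (V j) = 0"
    using det2_pluecker[of N "V 1" "V j" "V m"] by simp
  then have "tau 1 * (tau 1 * det2 (V j) (V m) - tau j * det2 (V 1) (V m)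
      + tau m * det2 (V 1) (V j)) = 0"
    by simp
  then have "(tau 1 * tau 1) * det2 (V j) (V m) - (tau j * tau 1) * det2 (V 1) (V m)
      + (tau m * tau 1) * det2 (V 1) (V j) = 0"
    by (simp add: algebra_simps)
  moreover have "tau 1 * tau 1 > 0" using assms(4) by (intro mult_pos_if_sgn_eq) auto
  then have "(tau 1 * tau 1) * det2 (V j) (V m) > 0" using ccw[of j m] assms by simp
  moreover have "(tau j * tau 1) * det2 (V 1) (V m) < 0"
    using ccw[of 1 m] assms by (simp add: mult_neg_pos)
  moreover have "(tau m * tau 1) * det2 (V 1) (V j) > 0"
    using ccw[of 1 j] assms pos by simp
  ultimately show False by linarith
qed

lemma tau_sign_split:
  assumes nonzero: "\<And>m. m \<in> {1..k} \<Longrightarrow> tau m \<noteq> 0"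
  obtains j where "2 \<le> j" "j \<le> k + 1"
    and "\<And>m. 1 \<le> m \<Longrightarrow> m < j \<Longrightarrow> tau m * tau 1 > 0"
    and "\<And>m. j \<le> m \<Longrightarrow> m \<le> k + 1 \<Longrightarrow> tau m * tau 1 < 0"
proof -
  define P where "P m \<longleftrightarrow> 2 \<le> m \<and> m \<le> k + 1 \<and> tau m * tau 1 < 0" for m
  define j where "j = Least P"
  have t1: "tau 1 * tau 1 > 0" using nonzero[of 1] k2 by (intro mult_pos_if_sgn_eq) auto
  then have "P (k + 1)" unfolding P_def using tau_last k2 by simp
  then have jP: "P j" and least: "\<And>m. P m \<Longrightarrow> j \<le> m"
    unfolding j_def by (auto intro: LeastI Least_le)
  show ?thesis
  proof
    show "2 \<le> j" "j \<le> k + 1" using jP unfolding P_def by auto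
  next
    fix m assume m: "1 \<le> m" "m < j"
    show "tau m * tau 1 > 0"
    proof (cases "m = 1")
      case False
      then have "\<not> P m" "m \<le> k" using least[of m] m jP unfolding P_def by auto
      then show ?thesis using nonzero[of m] t1 m False unfolding P_def
        by (auto simp: zero_less_mult_iff mult_less_0_iff linorder_neq_iff)
    qed (use t1 in simp)
  next
    fix m assume m: "j \<le> m" "m \<le> k + 1"
    show "tau m * tau 1 < 0"
    proof (cases "m = j \<or> m = k + 1")
      case True
      then show ?thesis using jP \<open>P (k + 1)\<close> unfolding P_def by auto
    next
      case False
      then have "tau m * tau 1 \<le> 0"
        using tau_sign_persists[of j m] jP m unfolding P_def by auto
      moreover have "tau m \<noteq> 0" "tau 1 \<noteq> 0" using nonzero[of m] nonzero[of 1] m False k2 by auto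
      ultimately show ?thesis by (simp add: less_le)
    qed
  qed
qed

lemma at_most_one_sign_change_degenerate_nonzero:
  assumes nonzero: "\<And>m. m \<in> {1..k} \<Longrightarrow> tau m \<noteq> 0"
  shows "at_most_one_sign_change k (\<lambda>i. b i - b (i + 1))"
proof -
  obtain j where j: "2 \<le> j" "j \<le> k + 1"
    and before: "\<And>m. 1 \<le> m \<Longrightarrow> m < j \<Longrightarrow> tau m * tau 1 > 0"
    and after: "\<And>m. j \<le> m \<Longrightarrow> m \<le> k + 1 \<Longrightarrow> tau m * tau 1 < 0"
    using tau_sign_split[OF nonzero] by blast
  define \<sigma> where "\<sigma> = sgn (det2 L N) * sgn (tau 1)"
  have sgn_before: "sgn (b i - b (i + 1)) = \<sigma>" if "i \<in> {1..k}" "i < j - 1" for i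
  proof -
    have ij: "1 \<le> i" "i + 1 < j" using that by auto
    have "sgn (tau i) = sgn (tau 1)" "sgn (tau (i + 1)) = sgn (tau 1)" "tau i \<noteq> 0"
      using before[OF ij(1)] before[of "i + 1"] ij by (auto intro: sgn_eq_if_mult_pos)
    then have "tau i * tau (i + 1) > 0" by (intro mult_pos_if_sgn_eq) auto
    then show ?thesis
      using sgn_diff_degenerate[OF that(1)] sgn_eq_if_mult_pos[OF before[of i]] that
      unfolding \<sigma>_def by simp
  qed
  have sgn_after: "sgn (b i - b (i + 1)) = - \<sigma>" if "i \<in> {1..k}" "j - 1 < i" for i
  proof -
    have ij: "j \<le> i" "i + 1 \<le> k + 1" using that by auto
    have "sgn (tau i) = - sgn (tau 1)" "sgn (tau (i + 1)) = - sgn (tau 1)" "tau i \<noteq> 0"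
      using after[OF ij(1)] after[of "i + 1"] ij by (auto intro: sgn_eq_minus_if_mult_neg)
    then have "tau i * tau (i + 1) > 0" by (intro mult_pos_if_sgn_eq) auto
    then show ?thesis
      using sgn_diff_degenerate[OF that(1)] sgn_eq_minus_if_mult_neg[OF after[of i]] that
      unfolding \<sigma>_def by simp
  qed
  show ?thesis
  proof (cases "\<sigma> \<le> 0")
    case True
    show ?thesis
    proof (rule at_most_one_sign_change_if_pivot[where x = "j - 1"])
      fix i assume "i \<in> {1..k}" "i < j - 1"
      then show "b i - b (i + 1) \<le> 0" using sgn_before True by (metis sgn_le_0_iff)
    next
      fix i assume "i \<in> {1..k}" "j - 1 < i"
      then show "b i - b (i + 1) \<ge> 0" using sgn_after True by (metis neg_0_le_iff_le zero_le_sgn_iff)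
    qed
  next
    case False
    have "at_most_one_sign_change k (\<lambda>i. - (b i - b (i + 1)))"
    proof (rule at_most_one_sign_change_if_pivot[where x = "j - 1"])
      fix i assume "i \<in> {1..k}" "i < j - 1"
      then have "sgn (b i - b (i + 1)) > 0" using sgn_before False by simp
      then show "- (b i - b (i + 1)) \<le> 0" by simp
    next
      fix i assume "i \<in> {1..k}" "j - 1 < i"
      then have "sgn (b i - b (i + 1)) < 0" using sgn_after False by simp
      then show "- (b i - b (i + 1)) \<ge> 0" by simp
    qed
    then show ?thesis by (simp only: at_most_one_sign_change_uminus)
  qed
qed

end

context half_turn_quotient
begin

theorem diff_at_most_one_sign_change: "at_most_one_sign_change k (\<lambda>i. b i - b (i + 1))"
proof (cases "A * C - B\<^sup>2 > 0")
  case True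
  then show ?thesis by (rule at_most_one_sign_change_definite)
next
  case False
  then have "B\<^sup>2 = A * C" using psd(3) by linarith
  then obtain N where N: "\<And>x. sym_form A B C x x = (det2 N x)\<^sup>2"
    using sym_form_degenerate_square[OF psd(1,2)] by auto
  have "R m = \<bar>det2 N (V m)\<bar>" if "m \<in> {1..k + 1}" for m
  proof -
    have "R m = sqrt ((R m)\<^sup>2)" using R_nonneg[OF that] by simp
    also have "\<dots> = \<bar>det2 N (V m)\<bar>" using R_sq[OF that] N by simp
    finally show ?thesis .
  qed
  then interpret half_turn_quotient_degenerate k V A B C L R b N
    by unfold_locales
  show ?thesis
  proof (cases "\<exists>j\<in>{1..k}. det2 N (V j) = 0")
    case True
    then show ?thesis using at_most_one_sign_change_degenerate_zero by blast
  next
    case False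
    then show ?thesis using at_most_one_sign_change_degenerate_nonzero by blast
  qed
qed

end

section \<open>The lattice vectors and the kernel of \<Omega>\<close>

lemma admissible_S_two_le: "admissible_S k u \<Longrightarrow> 2 \<le> k"
proof (rule ccontr)
  assume adm: "admissible_S k u" and "\<not> 2 \<le> k"
  then have k: "k = 0 \<or> k = 1" by auto
  obtain c :: "nat \<Rightarrow> int" where
    "(0, 1) = ((\<Sum>i\<in>{1..k}. c i * fst (u i)), (\<Sum>i\<in>{1..k}. c i * snd (u i)))"
    using adm unfolding admissible_S_def by blast
  moreover have "snd (u 1) = 0" using adm unfolding admissible_S_def by auto
  ultimately show False using k by (elim disjE) simp_all
qed

lemma convex_S_ccw:
  assumes adm: "admissible_S k u" and cvx: "convex_S k u"
  shows "i \<in> {1..k} \<Longrightarrow> j \<in> {1..k} \<Longrightarrow> i < j \<Longrightarrow> det2 (rvec (u i)) (rvec (u j)) > 0"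
proof (induction j)
  case (Suc j)
  have half_plane: "snd (rvec (u m)) > 0 \<or> (snd (rvec (u m)) = 0 \<and> fst (rvec (u m)) > 0)"
    if "m \<in> {1..k}" for m
    using adm that by (auto simp: admissible_S_def rvec_def)
  have "Suc j \<in> {2..k}" using Suc.prems by auto
  then have "det2 (rvec (u (Suc j - 1))) (rvec (u (Suc j))) > 0"
    using cvx unfolding convex_S_def by blast
  then have step: "det2 (rvec (u j)) (rvec (u (Suc j))) > 0" by simp
  show ?case
  proof (cases "j = i")
    case False
    then have j: "j \<in> {1..k}" "i < j" using Suc.prems by auto
    then have "det2 (rvec (u i)) (rvec (u j)) > 0" using Suc.IH Suc.prems by simp
    moreover have "i \<in> {1..k}" "Suc j \<in> {1..k}" using Suc.prems by auto
    ultimately show ?thesis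
      using det2_pos_trans[OF half_plane half_plane half_plane _ step] j by blast
  qed (use step in simp)
qed simp

text \<open>The sign comes from \<open>v\<^sub>1 = u\<^sub>1 + u\<^sub>k\<close>.\<close>
definition twisted_ext :: "nat \<Rightarrow> (nat \<Rightarrow> real) \<Rightarrow> nat \<Rightarrow> real" where
  "twisted_ext k a m = (if m = k + 1 then - a 1 else a m)"

lemma sum_by_parts:
  fixes U :: "nat \<Rightarrow> 'v::real_vector"
  assumes "1 \<le> n"
  shows "(\<Sum>i=2..n. a i *\<^sub>R (U i - U (i - 1)))
    = (\<Sum>i=1..n-1. (a i - a (i + 1)) *\<^sub>R U i) + a n *\<^sub>R U n - a 1 *\<^sub>R U 1"
  using assms
proof (induction n rule: nat_induct_at_least)
  case (Suc n)
  have "{1..Suc n - 1} = insert n {1..n - 1}" "n \<notin> {1..n - 1}" using Suc.hyps by auto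
  then show ?case
    using Suc by (simp add: sum.cl_ivl_Suc algebra_simps)
qed simp

lemma vvec_sum_by_parts:
  assumes k2: "2 \<le> k"
  shows "(\<Sum>i\<in>{1..k}. a i *\<^sub>R vvec k u i)
    = (\<Sum>i=1..k. (twisted_ext k a i - twisted_ext k a (i + 1)) *\<^sub>R rvec (u i))"
proof -
  let ?U = "\<lambda>i. rvec (u i)"
  have "(\<Sum>i\<in>{1..k}. a i *\<^sub>R vvec k u i)
      = a 1 *\<^sub>R (?U 1 + ?U k) + (\<Sum>i=2..k. a i *\<^sub>R (?U i - ?U (i - 1)))"
    using k2 by (simp add: sum.atLeast_Suc_atMost numeral_2_eq_2 vvec_def)
  also have "\<dots> = a 1 *\<^sub>R (?U 1 + ?U k)
      + ((\<Sum>i=1..k-1. (a i - a (i + 1)) *\<^sub>R ?U i) + a k *\<^sub>R ?U k - a 1 *\<^sub>R ?U 1)"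
    using k2 by (subst sum_by_parts) simp_all
  also have "\<dots> = (\<Sum>i=1..k-1. (a i - a (i + 1)) *\<^sub>R ?U i) + (a k + a 1) *\<^sub>R ?U k"
    by (simp add: algebra_simps)
  also have "\<dots> = (\<Sum>i=1..k. (twisted_ext k a i - twisted_ext k a (i + 1)) *\<^sub>R ?U i)"
  proof -
    have "{1..k} = insert k {1..k - 1}" "k \<notin> {1..k - 1}" using k2 by auto
    moreover have "(\<Sum>i=1..k-1. (twisted_ext k a i - twisted_ext k a (i + 1)) *\<^sub>R ?U i)
        = (\<Sum>i=1..k-1. (a i - a (i + 1)) *\<^sub>R ?U i)"
      by (rule sum.cong) (auto simp: twisted_ext_def)
    ultimately show ?thesis by (simp add: twisted_ext_def)
  qed
  finally show ?thesis .
qed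

lemma twisted_ext_constant_imp_zero:
  assumes "1 \<le> k" and "supp_in k a"
    and const: "\<And>i. i \<in> {1..k} \<Longrightarrow> twisted_ext k a i - twisted_ext k a (i + 1) = 0"
  shows "a = (\<lambda>_. 0)"
proof -
  have const_a: "a i = a 1" if "1 \<le> i" "i \<le> k" for i
    using that
  proof (induction i rule: nat_induct_at_least)
    case (Suc i)
    then show ?case using const[of i] by (simp add: twisted_ext_def)
  qed simp
  have "a k + a 1 = 0" using const[of k] assms(1) by (simp add: twisted_ext_def)
  moreover have "a k = a 1" using const_a[of k] assms(1) by simp
  ultimately have "a 1 = 0" by simp
  then have "a i = 0" if "i \<in> {1..k}" for i
    using const_a that by simp
  with assms(2) show ?thesis unfolding supp_in_def by auto
qed

lemma conformal_half_angle_ccw: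
  assumes "conformal_data k \<theta>" and "i \<in> {1..k}" "j \<in> {1..k}" "i < j"
  shows "det2 (Re (zvec \<theta> i), Im (zvec \<theta> i)) (Re (zvec \<theta> j), Im (zvec \<theta> j)) > 0"
proof -
  have "det2 (Re (zvec \<theta> i), Im (zvec \<theta> i)) (Re (zvec \<theta> j), Im (zvec \<theta> j))
      = sin (\<theta> j / 2 - \<theta> i / 2)"
    by (simp add: det2_def zvec_def sin_diff algebra_simps)
  moreover have "0 \<le> \<theta> i" "\<theta> j < 2 * pi" "\<theta> i < \<theta> j"
    using assms unfolding conformal_data_def by auto
  then have "0 < \<theta> j / 2 - \<theta> i / 2" "\<theta> j / 2 - \<theta> i / 2 < pi" by auto
  ultimately show ?thesis by (simp add: sin_gt_zero)
qed

lemma norm_sq_eq_sym_form: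
  fixes S T :: "'v::real_inner"
  shows "(norm (fst x *\<^sub>R S + snd x *\<^sub>R T))\<^sup>2 = sym_form (S \<bullet> S) (S \<bullet> T) (T \<bullet> T) x x"
  by (simp add: power2_norm_eq_inner sym_form_def inner_add_left inner_add_right inner_commute
      algebra_simps)

lemma gset_zero_if_weighted_in_span:
  fixes S T :: "'v::real_inner"
  assumes adm: "admissible_S k u" and cvx: "convex_S k u" and conf: "conformal_data k \<theta>"
    and a: "a \<in> gset k u"
    and rho: "\<And>i. i \<in> {1..k} \<Longrightarrow> \<rho> i = norm (Re (zvec \<theta> i) *\<^sub>R S + Im (zvec \<theta> i) *\<^sub>R T)"
    and weighted: "\<And>i. i \<in> {1..k} \<Longrightarrow> a i * \<rho> i = s * Re (zvec \<theta> i) + t * Im (zvec \<theta> i)"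
    and nonzero: "\<exists>m\<in>{1..k}. \<rho> m > 0"
  shows "a = (\<lambda>_. 0)"
proof -
  have k2: "2 \<le> k" using admissible_S_two_le[OF adm] .
  \<comment> \<open>\<open>\<theta>\<^sub>k\<^sub>+\<^sub>1 = 2\<pi>\<close> gives \<open>z\<^sub>k\<^sub>+\<^sub>1 = -z\<^sub>1\<close>, closing up the half-turn.\<close>
  define V where "V m = (Re (zvec (\<theta>(k + 1 := 2 * pi)) m), Im (zvec (\<theta>(k + 1 := 2 * pi)) m))" for m
  define R where "R = \<rho>(k + 1 := \<rho> 1)"
  have V: "V m = (Re (zvec \<theta> m), Im (zvec \<theta> m))" if "m \<in> {1..k}" for m
    using that by (simp add: V_def zvec_def)
  have antipodal: "V (k + 1) = - V 1"
    using conf k2 by (simp add: V_def zvec_def conformal_data_def)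
  interpret half_turn_quotient k V "S \<bullet> S" "S \<bullet> T" "T \<bullet> T" "(t, - s)" R "twisted_ext k a"
  proof
    show "det2 (V i) (V j) > 0" if "i \<in> {1..k}" "j \<in> {1..k}" "i < j" for i j
      using conformal_half_angle_ccw[OF conf that] V that by simp
    show "(R m)\<^sup>2 = sym_form (S \<bullet> S) (S \<bullet> T) (T \<bullet> T) (V m) (V m)" if "m \<in> {1..k + 1}" for m
    proof (cases "m = k + 1")
      case True
      have "sym_form (S \<bullet> S) (S \<bullet> T) (T \<bullet> T) (- V 1) (- V 1)
          = sym_form (S \<bullet> S) (S \<bullet> T) (T \<bullet> T) (V 1) (V 1)"
        by (simp add: sym_form_def)
      then show ?thesis
        using True antipodal rho[of 1] V[of 1] k2 norm_sq_eq_sym_form[where x = "V 1"]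
        by (simp add: R_def)
    next
      case False
      then show ?thesis
        using that rho[of m] V[of m] norm_sq_eq_sym_form[where x = "V m"] by (simp add: R_def)
    qed
    show "twisted_ext k a m * R m = det2 (t, - s) (V m)" if "m \<in> {1..k + 1}" for m
      using that weighted[of m] weighted[of 1] V[of m] V[of 1] antipodal k2
      by (cases "m = k + 1") (auto simp: twisted_ext_def R_def det2_def algebra_simps)
    show "(S \<bullet> T)\<^sup>2 \<le> S \<bullet> S * (T \<bullet> T)" by (rule Cauchy_Schwarz_ineq)
    show "R m \<ge> 0" if "m \<in> {1..k + 1}" for m
      using that rho[of m] rho[of 1] k2 by (cases "m = k + 1") (auto simp: R_def)
  qed (use k2 antipodal nonzero in \<open>auto simp: R_def\<close>)
  have comb: "(\<Sum>i=1..k. (twisted_ext k a i - twisted_ext k a (i + 1)) *\<^sub>R rvec (u i)) = 0"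
    using a vvec_sum_by_parts[OF k2] unfolding gset_def by simp
  have "twisted_ext k a i - twisted_ext k a (i + 1) = 0" if "i \<in> {1..k}" for i
    using ccw_combination_eq_zero[where U = "\<lambda>i. rvec (u i)", OF convex_S_ccw[OF adm cvx] k2 comb
        diff_at_most_one_sign_change that] .
  moreover have "supp_in k a" using a unfolding gset_def by simp
  ultimately show ?thesis
    using k2 by (intro twisted_ext_constant_imp_zero) auto
qed

section \<open>The moment map\<close>

definition quat_norm_sq :: "nat \<Rightarrow> (nat \<Rightarrow> complex \<times> complex) \<Rightarrow> nat \<Rightarrow> real" where
  "quat_norm_sq k q m = (if m \<in> {1..k} then (cmod (fst (q m)))\<^sup>2 + (cmod (snd (q m)))\<^sup>2 else 0)"

lemma I1_Afield:
  "I1 (Afield a p) m = (- (of_real (a m) * fst (p m)), of_real (a m) * snd (p m))"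
proof -
  have rot: "((\<lambda>t::real. x * cis (t * c)) has_vector_derivative (x * (\<i> * of_real c))) (at 0)"
    for x :: complex and c :: real
    unfolding has_vector_derivative_def
    by (auto intro!: derivative_eq_intros ext simp: scaleR_conv_of_real algebra_simps)
  have d1: "vector_derivative (\<lambda>t. fst (p m) * cis (t * a m)) (at 0) = fst (p m) * (\<i> * of_real (a m))"
    by (rule vector_derivative_at[OF rot])
  have "(\<lambda>t::real. snd (p m) * cnj (cis (t * a m))) = (\<lambda>t. snd (p m) * cis (t * - a m))"
    by (simp add: cis_cnj)
  then have d2: "vector_derivative (\<lambda>t. snd (p m) * cnj (cis (t * a m))) (at 0)
      = snd (p m) * (\<i> * of_real (- a m))"
    by (simp only: vector_derivative_at[OF rot])
  have "Afield a p m = (fst (p m) * (\<i> * of_real (a m)), snd (p m) * (\<i> * of_real (- a m)))"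
    unfolding Afield_def tact_def fst_conv snd_conv d1 d2 ..
  then show ?thesis unfolding I1_def by (simp add: algebra_simps)
qed

lemma nu1_along_I1_Afield:
  "nu1 k (\<lambda>m. p m + t *\<^sub>R I1 (Afield a p) m)
    = (\<lambda>i. nu1 k p i + t * (- 2 * a i * quat_norm_sq k p i) + t\<^sup>2 * ((a i)\<^sup>2 * nu1 k p i))"
proof
  fix i
  have pt: "p i + t *\<^sub>R I1 (Afield a p) i
      = (fst (p i) * of_real (1 - t * a i), snd (p i) * of_real (1 + t * a i))"
    by (simp add: I1_Afield prod_eq_iff scaleR_conv_of_real algebra_simps)
  show "nu1 k (\<lambda>m. p m + t *\<^sub>R I1 (Afield a p) m) i
      = nu1 k p i + t * (- 2 * a i * quat_norm_sq k p i) + t\<^sup>2 * ((a i)\<^sup>2 * nu1 k p i)"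
  proof -
    have "(cmod (fst (p i) * of_real (1 - t * a i)))\<^sup>2 = (cmod (fst (p i)))\<^sup>2 * (1 - t * a i)\<^sup>2"
      "(cmod (snd (p i) * of_real (1 + t * a i)))\<^sup>2 = (cmod (snd (p i)))\<^sup>2 * (1 + t * a i)\<^sup>2"
      by (simp_all only: norm_mult norm_of_real power_mult_distrib power2_abs)
    then show ?thesis
      unfolding nu1_def quat_norm_sq_def pt fst_conv snd_conv
      by (simp add: power2_eq_square algebra_simps)
  qed
qed

lemma dfun_nu1_I1_Afield:
  assumes add: "\<And>\<xi> \<eta>. F (\<lambda>i. \<xi> i + \<eta> i) = F \<xi> + F \<eta>"
    and scale: "\<And>c \<xi>. F (\<lambda>i. c * \<xi> i) = c * F \<xi>"
  shows "dfun (\<lambda>q. F (nu1 k q)) p (I1 (Afield a p)) = F (\<lambda>i. - 2 * a i * quat_norm_sq k p i)"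
proof -
  define cv ev where "cv i = - 2 * a i * quat_norm_sq k p i" and "ev i = (a i)\<^sup>2 * nu1 k p i" for i
  have "F (nu1 k (\<lambda>m. p m + t *\<^sub>R I1 (Afield a p) m)) = F (nu1 k p) + t * F cv + t\<^sup>2 * F ev" for t
    unfolding nu1_along_I1_Afield cv_def[symmetric] ev_def[symmetric] add scale ..
  then have "(\<lambda>t. F (nu1 k (\<lambda>m. p m + t *\<^sub>R I1 (Afield a p) m)))
      = (\<lambda>t. F (nu1 k p) + t * F cv + t\<^sup>2 * F ev)"
    by (rule ext)
  moreover have "((\<lambda>t. F (nu1 k p) + t * F cv + t\<^sup>2 * F ev) has_real_derivative F cv) (at 0)"
    by (auto intro!: derivative_eq_intros)
  ultimately show ?thesis
    unfolding dfun_def cv_def by (simp add: DERIV_imp_deriv)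
qed

lemma norm_triple_sq: "(norm (x :: real, y :: real, z :: real))\<^sup>2 = x\<^sup>2 + y\<^sup>2 + z\<^sup>2"
  by (simp add: norm_Pair)

lemma quat_norm_sq_eq_norm_nu:
  assumes m: "m \<in> {1..k}"
  shows "quat_norm_sq k p m = norm (nu1 k p m, nu2 k p m, nu3 k p m)"
proof -
  define X Y where "X = (cmod (fst (p m)))\<^sup>2" and "Y = (cmod (snd (p m)))\<^sup>2"
  have "(nu2 k p m)\<^sup>2 + (nu3 k p m)\<^sup>2 = (cmod (2 * \<i> * fst (p m) * snd (p m)))\<^sup>2"
    using m unfolding nu2_def nu3_def cmod_power2 by simp
  also have "\<dots> = 4 * X * Y"
    unfolding X_def Y_def by (simp add: norm_mult power_mult_distrib)
  finally have "(norm (nu1 k p m, nu2 k p m, nu3 k p m))\<^sup>2 = (X - Y)\<^sup>2 + 4 * X * Y"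
    using m unfolding norm_triple_sq by (simp add: nu1_def X_def Y_def)
  also have "\<dots> = (quat_norm_sq k p m)\<^sup>2"
    using m unfolding quat_norm_sq_def X_def Y_def by (simp add: power2_eq_square algebra_simps)
  finally show ?thesis
    using m by (simp add: quat_norm_sq_def)
qed

lemma Bstar_annihilated_in_span:
  assumes "Bstar_ok k u \<theta> Bs" and "supp_in k \<xi>" and "\<forall>a\<in>gset k u. Bs \<xi> a = 0"
  obtains s t where "\<And>i. i \<in> {1..k} \<Longrightarrow> \<xi> i = s * Re (zvec \<theta> i) + t * Im (zvec \<theta> i)"
proof -
  have "\<xi> \<in> Wset k \<theta>" using assms unfolding Bstar_ok_def by blast
  then show thesis using that unfolding Wset_def by blast
qed

lemma Pset_quat_norm_in_span:
  assumes B: "Bstar_ok k u \<theta> Bs" and p: "p \<in> Pset k u Bs"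
  obtains S T :: "real \<times> real \<times> real" where
    "\<And>i. i \<in> {1..k} \<Longrightarrow> quat_norm_sq k p i = norm (Re (zvec \<theta> i) *\<^sub>R S + Im (zvec \<theta> i) *\<^sub>R T)"
proof -
  have supp: "supp_in k (nu1 k p)" "supp_in k (nu2 k p)" "supp_in k (nu3 k p)"
    unfolding supp_in_def nu1_def nu2_def nu3_def by auto
  have ann: "\<forall>a\<in>gset k u. Bs (nu1 k p) a = 0" "\<forall>a\<in>gset k u. Bs (nu2 k p) a = 0"
    "\<forall>a\<in>gset k u. Bs (nu3 k p) a = 0"
    using p unfolding Pset_def by auto
  obtain s1 t1 where n1: "\<And>i. i \<in> {1..k} \<Longrightarrow> nu1 k p i = s1 * Re (zvec \<theta> i) + t1 * Im (zvec \<theta> i)"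
    using Bstar_annihilated_in_span[OF B supp(1) ann(1)] by blast
  obtain s2 t2 where n2: "\<And>i. i \<in> {1..k} \<Longrightarrow> nu2 k p i = s2 * Re (zvec \<theta> i) + t2 * Im (zvec \<theta> i)"
    using Bstar_annihilated_in_span[OF B supp(2) ann(2)] by blast
  obtain s3 t3 where n3: "\<And>i. i \<in> {1..k} \<Longrightarrow> nu3 k p i = s3 * Re (zvec \<theta> i) + t3 * Im (zvec \<theta> i)"
    using Bstar_annihilated_in_span[OF B supp(3) ann(3)] by blast
  have "quat_norm_sq k p i = norm (Re (zvec \<theta> i) *\<^sub>R (s1, s2, s3) + Im (zvec \<theta> i) *\<^sub>R (t1, t2, t3))"
    if "i \<in> {1..k}" for i
    using quat_norm_sq_eq_norm_nu[OF that] n1[OF that] n2[OF that] n3[OF that]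
    by (simp add: algebra_simps)
  then show thesis by (rule that)
qed

lemma Pset_quat_norm_pos:
  assumes "p \<in> Pset k u Bs"
  shows "\<exists>m\<in>{1..k}. quat_norm_sq k p m > 0"
proof -
  obtain m where m: "m \<in> {1..k}" "p m \<noteq> 0" using assms unfolding Pset_def by auto
  then have "fst (p m) \<noteq> 0 \<or> snd (p m) \<noteq> 0" by (simp add: prod_eq_iff)
  then have "(cmod (fst (p m)))\<^sup>2 + (cmod (snd (p m)))\<^sup>2 > 0"
    by (auto simp: add_pos_nonneg add_nonneg_pos)
  then show ?thesis using m unfolding quat_norm_sq_def by auto
qed

theorem mainTheorem4:
  fixes k :: nat and u :: "nat \<Rightarrow> int \<times> int" and \<theta> :: "nat \<Rightarrow> real"
    and Bs :: "(nat \<Rightarrow> real) \<Rightarrow> (nat \<Rightarrow> real) \<Rightarrow> real"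
  assumes "admissible_S k u" and "convex_S k u"
    and "conformal_data k \<theta>" and "Bstar_ok k u \<theta> Bs"
  shows "\<forall>p \<in> Pset k u Bs. \<forall>a \<in> gset k u. a \<noteq> (\<lambda>_. 0) \<longrightarrow>
           (\<exists>a' \<in> gset k u. dfun (\<lambda>q. Bs (nu1 k q) a') p (I1 (Afield a p)) \<noteq> 0)"
proof (intro ballI impI)
  fix p a assume p: "p \<in> Pset k u Bs" and a: "a \<in> gset k u" and "a \<noteq> (\<lambda>_. 0)"
  have deriv: "dfun (\<lambda>q. Bs (nu1 k q) a') p (I1 (Afield a p))
      = Bs (\<lambda>i. - 2 * a i * quat_norm_sq k p i) a'" for a'
    using assms(4) unfolding Bstar_ok_def by (intro dfun_nu1_I1_Afield) auto
  show "\<exists>a' \<in> gset k u. dfun (\<lambda>q. Bs (nu1 k q) a') p (I1 (Afield a p)) \<noteq> 0"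
  proof (rule ccontr)
    assume "\<not> ?thesis"
    then have "\<forall>a'\<in>gset k u. Bs (\<lambda>i. - 2 * a i * quat_norm_sq k p i) a' = 0"
      using deriv by auto
    moreover have "supp_in k (\<lambda>i. - 2 * a i * quat_norm_sq k p i)"
      unfolding supp_in_def quat_norm_sq_def by simp
    ultimately obtain s t where
      "\<And>i. i \<in> {1..k} \<Longrightarrow> - 2 * a i * quat_norm_sq k p i = s * Re (zvec \<theta> i) + t * Im (zvec \<theta> i)"
      using Bstar_annihilated_in_span[OF assms(4)] by blast
    then have "a i * quat_norm_sq k p i = (- s / 2) * Re (zvec \<theta> i) + (- t / 2) * Im (zvec \<theta> i)"
      if "i \<in> {1..k}" for i
      using that by fastforce
    moreover obtain S T :: "real \<times> real \<times> real" where
      "\<And>i. i \<in> {1..k} \<Longrightarrow> quat_norm_sq k p i = norm (Re (zvec \<theta> i) *\<^sub>R S + Im (zvec \<theta> i) *\<^sub>R T)"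
      using Pset_quat_norm_in_span[OF assms(4) p] by blast
    ultimately have "a = (\<lambda>_. 0)"
      using gset_zero_if_weighted_in_span[OF assms(1-3) a] Pset_quat_norm_pos[OF p] by blast
    with \<open>a \<noteq> (\<lambda>_. 0)\<close> show False ..
  qed
qed

end
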